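(* Suppose $f$ is $L_f$-smooth and $\mu_f$-strongly convex. Let $x^\star$ be a minimizer of $f$ and $x^\star_{\mathcal D}$ a minimizer of $\tilde f$. Then $$f(x^\star)\le f(x^\star_{\mathcal D})\le f(x^\star)+\frac{(L_{\mathcal D}-1)L_f}{2}\|x^\star-s\|^2-\frac{(\mu_{\mathcal D}-1)\mu_f}{2}\|x^\star_{\mathcal D}-s\|^2.$$
   Context: Let $f:\mathbb R^d\to\mathbb R$, fix $s\in\mathbb R^d$, and let $\mathcal D$ be a distribution of random matrices $\mathbf S\in\mathbb R^{d\times d}$ with $\mathbb E[\mathbf S]=I$ and $\mathbb E[\mathbf S^\top\mathbf S]$ finite. Define $f_{\mathbf S}(x)=f(s+\mathbf S(x-s))$, $\tilde f(x)=\mathbb E_{\mathbf S\sim\mathcal D}[f_{\mathbf S}(x)]$, $L_{\mathcal D}=\lambda_{\max}(\mathbb E[\mathbf S^\top\mathbf S])$, $\mu_{\mathcal D}=\lambda_{\min}(\mathbb E[\mathbf S^\top\mathbf S])$. $f$ is $L_f$-smooth if differentiable, bounded below, and $f(x+h)\le f(x)+\langle\nabla f(x),h\rangle+\frac{L_f}{2}\|h\|^2$ for all $x,h$; $\mu_f$-strongly convex if $f(x+h)\ge f(x)+\langle\nabla f(x),h\rangle+\frac{\mu_f}{2}\|h\|^2$ for all $x,h$. *)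

theory Defs
  imports "HOL-Analysis.Analysis" "HOL-Probability.Probability"
begin

definition L_smooth :: "real \<Rightarrow> (real^'n \<Rightarrow> real) \<Rightarrow> bool" where
  "L_smooth L f \<longleftrightarrow> bdd_below (range f) \<and>
     (\<forall>x. \<exists>g. (GDERIV f x :> g) \<and>
        (\<forall>h. f (x + h) \<le> f x + g \<bullet> h + L / 2 * (norm h)\<^sup>2))"

definition strongly_convex :: "real \<Rightarrow> (real^'n \<Rightarrow> real) \<Rightarrow> bool" where
  "strongly_convex \<mu> f \<longleftrightarrow>
     (\<forall>x. \<exists>g. (GDERIV f x :> g) \<and>
        (\<forall>h. f (x + h) \<ge> f x + g \<bullet> h + \<mu> / 2 * (norm h)\<^sup>2))"

definition eigenvalues :: "real^'n^'n \<Rightarrow> real set" where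
  "eigenvalues A = {c. \<exists>v. v \<noteq> 0 \<and> A *v v = c *\<^sub>R v}"

definition lambda_max :: "real^'n^'n \<Rightarrow> real" where
  "lambda_max A = Max (eigenvalues A)"

definition lambda_min :: "real^'n^'n \<Rightarrow> real" where
  "lambda_min A = Min (eigenvalues A)"

definition sketch :: "(real^'n \<Rightarrow> real) \<Rightarrow> real^'n \<Rightarrow> real^'n^'n \<Rightarrow> real^'n \<Rightarrow> real" where
  "sketch f s S x = f (s + S *v (x - s))"

definition f_tilde :: "(real^'n^'n) measure \<Rightarrow> (real^'n \<Rightarrow> real) \<Rightarrow> real^'n \<Rightarrow> real^'n \<Rightarrow> real" where
  "f_tilde D f s x = (\<integral>S. sketch f s S x \<partial>D)"

end

theory Submission imports Defs begin

text \<open>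
  Put \<open>h = x - s\<close>, so that \<open>f\<^sub>S(x) = f(x + (S h - h))\<close>. Smoothness and strong convexity
  of \<open>f\<close> at \<open>x\<close> sandwich \<open>f\<^sub>S(x)\<close> between two quadratic models in \<open>S h - h\<close>. Taking
  expectations, \<open>E[S] = I\<close> kills the linear terms and \<open>E \<parallel>S h - h\<parallel>\<^sup>2 = h\<^sup>T E[S\<^sup>T S] h - \<parallel>h\<parallel>\<^sup>2\<close>,
  which lies between \<open>(\<mu>\<^sub>D - 1) \<parallel>h\<parallel>\<^sup>2\<close> and \<open>(L\<^sub>D - 1) \<parallel>h\<parallel>\<^sup>2\<close> by the Rayleigh bounds for the
  symmetric matrix \<open>E[S\<^sup>T S]\<close>. The upper estimate at \<open>x\<^sup>\<star>\<close>, the lower one at \<open>x\<^sup>\<star>\<^sub>D\<close> and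
  minimality of \<open>x\<^sup>\<star>\<^sub>D\<close> for the averaged function combine to the claim.
\<close>

lemma linear_coeff_zero_if_quadratic_nonpos:
  fixes a b :: real
  assumes "\<And>t. 2 * t * a + t\<^sup>2 * b \<le> 0"
  shows "a = 0"
proof (rule ccontr)
  assume "a \<noteq> 0"
  define d where "d = \<bar>b\<bar> + 1"
  have "d > 0" by (simp add: d_def)
  have "2 * (a / d) * a + (a / d)\<^sup>2 * b = a\<^sup>2 * (2 * d + b) / d\<^sup>2"
    using \<open>d > 0\<close> by (simp add: field_simps power2_eq_square)
  also have "\<dots> > 0"
    using \<open>a \<noteq> 0\<close> \<open>d > 0\<close> by (intro divide_pos_pos mult_pos_pos) (auto simp: abs_if d_def)
  finally show False using assms[of "a / d"] by simp
qed

text \<open>Perturbing \<open>v\<close> to \<open>v + t w\<close> gives a quadratic in \<open>t\<close> with maximum at \<open>0\<close>, so its linear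
  coefficient \<open>w \<bullet> (F v - c v)\<close> vanishes.\<close>
lemma self_adjoint_rayleigh_maximizer_eigenvector:
  fixes F :: "'a::real_inner \<Rightarrow> 'a"
  assumes "linear F" and sym: "\<And>u w. u \<bullet> F w = w \<bullet> F u"
    and bound: "\<And>x. x \<bullet> F x \<le> c * (norm x)\<^sup>2"
    and v: "v \<bullet> F v = c" "norm v = 1"
  shows "F v = c *\<^sub>R v"
proof -
  interpret F: linear F by fact
  have "w \<bullet> (F v - c *\<^sub>R v) = 0" for w
  proof -
    have "2 * t * (w \<bullet> F v - c * (v \<bullet> w)) + t\<^sup>2 * (w \<bullet> F w - c * (norm w)\<^sup>2) \<le> 0" for t
    proof -
      have "(v + t *\<^sub>R w) \<bullet> F (v + t *\<^sub>R w) = c + 2 * t * (w \<bullet> F v) + t\<^sup>2 * (w \<bullet> F w)"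
        using sym[of v w] v(1)
        by (simp add: F.add F.scale inner_add_left inner_add_right power2_eq_square algebra_simps)
      moreover have "(norm (v + t *\<^sub>R w))\<^sup>2 = 1 + 2 * t * (v \<bullet> w) + t\<^sup>2 * (norm w)\<^sup>2"
        using v(2) unfolding power2_norm_eq_inner
        by (simp add: inner_add_left inner_add_right power2_eq_square algebra_simps inner_commute
            norm_eq_1)
      ultimately show ?thesis
        using bound[of "v + t *\<^sub>R w"] by (simp add: algebra_simps power2_eq_square)
    qed
    then have "w \<bullet> F v - c * (v \<bullet> w) = 0"
      by (rule linear_coeff_zero_if_quadratic_nonpos)
    then show ?thesis by (simp add: inner_diff_right inner_commute)
  qed
  from this[of "F v - c *\<^sub>R v"] show ?thesis by simp
qed

lemma self_adjoint_top_eigenvector: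
  fixes F :: "'a::euclidean_space \<Rightarrow> 'a"
  assumes "linear F" and sym: "\<And>u w. u \<bullet> F w = w \<bullet> F u"
  obtains v c where "v \<noteq> 0" "F v = c *\<^sub>R v" "\<And>x. x \<bullet> F x \<le> c * (norm x)\<^sup>2"
proof -
  interpret F: bounded_linear F
    using \<open>linear F\<close> by (simp add: linear_conv_bounded_linear)
  have "sphere (0::'a) 1 \<noteq> {}" by simp
  moreover have "continuous_on (sphere 0 1) (\<lambda>x. x \<bullet> F x)"
    by (intro continuous_intros F.continuous_on continuous_on_id)
  ultimately obtain v where v: "v \<in> sphere 0 1"
    and v_max: "\<And>y. y \<in> sphere 0 1 \<Longrightarrow> y \<bullet> F y \<le> v \<bullet> F v"
    using continuous_attains_sup[OF compact_sphere] by blast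
  define c where "c = v \<bullet> F v"
  have bound: "x \<bullet> F x \<le> c * (norm x)\<^sup>2" for x
  proof (cases "x = 0")
    case False
    have "(x /\<^sub>R norm x) \<bullet> F (x /\<^sub>R norm x) \<le> c"
      using v_max[of "x /\<^sub>R norm x"] False by (simp add: c_def)
    moreover have "(x /\<^sub>R norm x) \<bullet> F (x /\<^sub>R norm x) = (x \<bullet> F x) / (norm x)\<^sup>2"
      by (simp add: F.scaleR power2_eq_square field_simps)
    ultimately show ?thesis
      using False by (simp add: divide_le_eq mult.commute)
  qed (simp add: F.zero)
  have "F v = c *\<^sub>R v"
    using self_adjoint_rayleigh_maximizer_eigenvector[OF \<open>linear F\<close> sym bound] v
    by (simp add: c_def)
  moreover have "v \<noteq> 0" using v by auto
  ultimately show thesis using bound that by blast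
qed

lemma finite_eigenvalues_symmetric:
  fixes M :: "real^'n^'n"
  assumes sym: "\<And>u v. u \<bullet> (M *v v) = v \<bullet> (M *v u)"
  shows "finite (eigenvalues M)"
proof (rule ccontr)
  assume "infinite (eigenvalues M)"
  then obtain T where T: "T \<subseteq> eigenvalues M" "finite T" "card T = DIM(real^'n) + 1"
    using infinite_arbitrarily_large by blast
  define ev where "ev c = (SOME v. v \<noteq> 0 \<and> M *v v = c *\<^sub>R v)" for c
  have ev: "ev c \<noteq> 0 \<and> M *v ev c = c *\<^sub>R ev c" if "c \<in> T" for c
  proof -
    have "\<exists>v. v \<noteq> 0 \<and> M *v v = c *\<^sub>R v"
      using that T(1) by (auto simp: eigenvalues_def)
    then show ?thesis unfolding ev_def by (rule someI_ex)
  qed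
  have ortho: "ev a \<bullet> ev b = 0" if "a \<in> T" "b \<in> T" "a \<noteq> b" for a b
  proof -
    have "b * (ev a \<bullet> ev b) = a * (ev a \<bullet> ev b)"
      using sym[of "ev a" "ev b"] ev[OF that(1)] ev[OF that(2)] by (simp add: inner_commute)
    then show ?thesis using that(3) by simp
  qed
  have "inj_on ev T"
  proof (rule inj_onI)
    fix a b assume "a \<in> T" "b \<in> T" "ev a = ev b"
    then show "a = b"
      using ortho[of a b] ev[of a] by (metis inner_eq_zero_iff)
  qed
  moreover have "independent (ev ` T)"
    by (rule pairwise_orthogonal_independent)
       (use ortho ev in \<open>auto simp: pairwise_def orthogonal_def\<close>)
  then have "card (ev ` T) \<le> DIM(real^'n)" by (rule independent_bound [THEN conjunct2])
  ultimately have "card T \<le> DIM(real^'n)" by (simp add: card_image)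
  with T(3) show False by simp
qed

lemma quadratic_form_le_lambda_max:
  fixes M :: "real^'n^'n"
  assumes sym: "\<And>u v. u \<bullet> (M *v v) = v \<bullet> (M *v u)"
  shows "h \<bullet> (M *v h) \<le> lambda_max M * (norm h)\<^sup>2"
proof -
  obtain v c where "v \<noteq> 0" "M *v v = c *\<^sub>R v" and bound: "\<And>x. x \<bullet> (M *v x) \<le> c * (norm x)\<^sup>2"
    using self_adjoint_top_eigenvector[of "(*v) M", OF matrix_vector_mul_linear sym] by blast
  then have "c \<in> eigenvalues M" by (auto simp: eigenvalues_def)
  then have "c \<le> lambda_max M"
    using finite_eigenvalues_symmetric[OF sym] by (simp add: lambda_max_def)
  then have "c * (norm h)\<^sup>2 \<le> lambda_max M * (norm h)\<^sup>2"
    by (simp add: mult_right_mono)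
  with bound[of h] show ?thesis by linarith
qed

lemma lambda_min_le_quadratic_form:
  fixes M :: "real^'n^'n"
  assumes sym: "\<And>u v. u \<bullet> (M *v v) = v \<bullet> (M *v u)"
  shows "lambda_min M * (norm h)\<^sup>2 \<le> h \<bullet> (M *v h)"
proof -
  have lin: "linear (\<lambda>x. - (M *v x))"
    by (simp add: linear_compose_neg)
  have sym_neg: "u \<bullet> - (M *v w) = w \<bullet> - (M *v u)" for u w
    using sym[of u w] by simp
  obtain v c where "v \<noteq> 0" and eigen: "- (M *v v) = c *\<^sub>R v"
    and bound: "\<And>x. x \<bullet> - (M *v x) \<le> c * (norm x)\<^sup>2"
    using self_adjoint_top_eigenvector[of "\<lambda>x. - (M *v x)", OF lin sym_neg] by blast
  have "M *v v = (- c) *\<^sub>R v"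
    using arg_cong[OF eigen, of uminus] by simp
  with \<open>v \<noteq> 0\<close> have "- c \<in> eigenvalues M"
    unfolding eigenvalues_def by blast
  then have "lambda_min M \<le> - c"
    using finite_eigenvalues_symmetric[OF sym] by (simp add: lambda_min_def)
  then have "lambda_min M * (norm h)\<^sup>2 \<le> - c * (norm h)\<^sup>2"
    by (rule mult_right_mono) simp
  also have "\<dots> \<le> h \<bullet> (M *v h)"
    using bound[of h] by (simp add: inner_minus_right)
  finally show ?thesis .
qed

lemma bounded_linear_matrix_vector_mult_left: "bounded_linear (\<lambda>A::real^'n^'m. A *v v)"
proof -
  have "linear (\<lambda>A::real^'n^'m. A *v v)"
    by (rule linearI)
       (auto simp: matrix_vector_mult_def vec_eq_iff sum.distrib sum_distrib_left algebra_simps)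
  then show ?thesis by (simp add: linear_conv_bounded_linear)
qed

lemma inner_transpose_mult_matrix: "u \<bullet> ((transpose S ** S) *v v) = (S *v u) \<bullet> (S *v (v::real^'n))"
  by (metis dot_lmul_matrix inner_commute matrix_vector_mul_assoc vector_transpose_matrix)

lemma norm_sketch_error_sq:
  "(norm (S *v h - h))\<^sup>2 = h \<bullet> ((transpose S ** S) *v h) - 2 * (h \<bullet> (S *v h)) + h \<bullet> (h::real^'n)"
  by (simp add: power2_norm_eq_inner inner_transpose_mult_matrix inner_diff_left inner_diff_right
      inner_commute)

lemma sketch_eq_shift: "sketch f s S x = f (x + (S *v (x - s) - (x - s)))"
  by (simp add: sketch_def algebra_simps)

lemma L_smooth_imp_continuous: "L_smooth L f \<Longrightarrow> continuous_on UNIV f"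
  unfolding L_smooth_def gderiv_def
  by (metis continuous_at_imp_continuous_on has_derivative_continuous)

lemma integral_between_integrable_bounds:
  fixes g :: "'a \<Rightarrow> real"
  assumes "integrable M l" "integrable M u" "g \<in> borel_measurable M"
    and "\<And>x. l x \<le> g x" "\<And>x. g x \<le> u x"
  shows "integral\<^sup>L M l \<le> integral\<^sup>L M g \<and> integral\<^sup>L M g \<le> integral\<^sup>L M u"
proof -
  have "integrable M g"
  proof (rule Bochner_Integration.integrable_bound)
    show "integrable M (\<lambda>x. \<bar>l x\<bar> + \<bar>u x\<bar>)" using assms(1,2) by auto
    show "AE x in M. norm (g x) \<le> norm (\<bar>l x\<bar> + \<bar>u x\<bar>)"
    proof (rule AE_I2)
      fix x
      have "- \<bar>l x\<bar> \<le> g x" "g x \<le> \<bar>u x\<bar>"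
        using assms(4,5)[of x] by (auto intro: order_trans)
      then show "norm (g x) \<le> norm (\<bar>l x\<bar> + \<bar>u x\<bar>)" by simp
    qed
  qed fact
  then show ?thesis using assms by (auto intro: integral_mono)
qed

locale sketch_distribution = prob_space D
  for D :: "(real^'n^'n) measure" +
  assumes sets_D: "sets D = sets borel"
    and integrable_S: "integrable D (\<lambda>S. S)"
    and expectation_S: "(\<integral>S. S \<partial>D) = mat 1"
    and integrable_second_moment: "integrable D (\<lambda>S. transpose S ** S)"
begin

definition second_moment :: "real^'n^'n" where
  "second_moment = (\<integral>S. transpose S ** S \<partial>D)"

lemma second_moment_symmetric: "u \<bullet> (second_moment *v v) = v \<bullet> (second_moment *v u)"
proof -
  have "u \<bullet> (second_moment *v v) = (\<integral>S. (S *v u) \<bullet> (S *v v) \<partial>D)" for u v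
    using integral_bounded_linear[OF bounded_linear_compose[OF bounded_linear_inner_right
          bounded_linear_matrix_vector_mult_left] integrable_second_moment, of u v]
    by (simp add: second_moment_def inner_transpose_mult_matrix)
  then show ?thesis by (simp add: inner_commute)
qed

lemma has_integral_quadratic_model:
  "has_bochner_integral D (\<lambda>S. c + g \<bullet> (S *v h - h) + K / 2 * (norm (S *v h - h))\<^sup>2)
     (c + K / 2 * (h \<bullet> (second_moment *v h) - (norm h)\<^sup>2))"
proof -
  have const: "has_bochner_integral D (\<lambda>_. a) a" for a :: real
    by (simp add: has_bochner_integral_iff prob_space)
  have S: "has_bochner_integral D (\<lambda>S. S *v h) h"
    using has_bochner_integral_bounded_linear[OF bounded_linear_matrix_vector_mult_left
        has_bochner_integral_integrable[OF integrable_S]] expectation_S by simp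
  have SS: "has_bochner_integral D (\<lambda>S. (transpose S ** S) *v h) (second_moment *v h)"
    using has_bochner_integral_bounded_linear[OF bounded_linear_matrix_vector_mult_left
        has_bochner_integral_integrable[OF integrable_second_moment]]
    by (simp add: second_moment_def)
  have "has_bochner_integral D
      (\<lambda>S. c + (g \<bullet> (S *v h) - g \<bullet> h)
             + K / 2 * (h \<bullet> ((transpose S ** S) *v h) - 2 * (h \<bullet> (S *v h)) + h \<bullet> h))
      (c + (g \<bullet> h - g \<bullet> h) + K / 2 * (h \<bullet> (second_moment *v h) - 2 * (h \<bullet> h) + h \<bullet> h))"
    by (intro has_bochner_integral_add has_bochner_integral_diff has_bochner_integral_mult_right
        has_bochner_integral_inner_right const S SS)
  then show ?thesis
    unfolding norm_sketch_error_sq by (simp add: inner_diff_right power2_norm_eq_inner)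
qed

lemma sketch_measurable:
  assumes "continuous_on UNIV f"
  shows "(\<lambda>S. sketch f s S x) \<in> borel_measurable D"
proof -
  have "continuous_on UNIV (\<lambda>S. f (s + S *v (x - s)))"
    by (intro continuous_on_compose2[OF assms] continuous_intros
        linear_continuous_on bounded_linear_matrix_vector_mult_left) auto
  then show ?thesis
    unfolding sketch_def measurable_cong_sets[OF sets_D refl]
    by (rule borel_measurable_continuous_onI)
qed

lemma f_tilde_between_quadratic_models:
  assumes smooth: "L_smooth Lf f" and sconv: "strongly_convex \<mu>f f"
  shows "f x + \<mu>f / 2 * ((x - s) \<bullet> (second_moment *v (x - s)) - (norm (x - s))\<^sup>2)
           \<le> f_tilde D f s x"
    and "f_tilde D f s x
           \<le> f x + Lf / 2 * ((x - s) \<bullet> (second_moment *v (x - s)) - (norm (x - s))\<^sup>2)"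
proof -
  obtain g where up: "\<And>d. f (x + d) \<le> f x + g \<bullet> d + Lf / 2 * (norm d)\<^sup>2"
    using smooth unfolding L_smooth_def by blast
  obtain g' where lo: "\<And>d. f x + g' \<bullet> d + \<mu>f / 2 * (norm d)\<^sup>2 \<le> f (x + d)"
    using sconv unfolding strongly_convex_def by blast
  define h where "h = x - s"
  note model_integral = has_bochner_integral_integral_eq[OF has_integral_quadratic_model]
  have "integral\<^sup>L D (\<lambda>S. f x + g' \<bullet> (S *v h - h) + \<mu>f / 2 * (norm (S *v h - h))\<^sup>2)
          \<le> f_tilde D f s x
        \<and> f_tilde D f s x
          \<le> integral\<^sup>L D (\<lambda>S. f x + g \<bullet> (S *v h - h) + Lf / 2 * (norm (S *v h - h))\<^sup>2)"
    unfolding f_tilde_def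
    by (intro integral_between_integrable_bounds sketch_measurable
        L_smooth_imp_continuous[OF smooth] integrable.intros[OF has_integral_quadratic_model])
       (simp_all only: sketch_eq_shift h_def up lo)
  then show "f x + \<mu>f / 2 * (h \<bullet> (second_moment *v h) - (norm h)\<^sup>2) \<le> f_tilde D f s x"
    and "f_tilde D f s x \<le> f x + Lf / 2 * (h \<bullet> (second_moment *v h) - (norm h)\<^sup>2)"
    unfolding model_integral by auto
qed

lemma f_tilde_le_lambda_max_bound:
  assumes "L_smooth Lf f" "strongly_convex \<mu>f f" "0 \<le> Lf"
  shows "f_tilde D f s x \<le> f x + (lambda_max second_moment - 1) * Lf / 2 * (norm (x - s))\<^sup>2"
proof -
  have "f_tilde D f s x
          \<le> f x + Lf / 2 * ((x - s) \<bullet> (second_moment *v (x - s)) - (norm (x - s))\<^sup>2)"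
    by (rule f_tilde_between_quadratic_models(2)[OF assms(1,2)])
  also have "\<dots> \<le> f x + Lf / 2 * ((lambda_max second_moment - 1) * (norm (x - s))\<^sup>2)"
    using quadratic_form_le_lambda_max[OF second_moment_symmetric, of "x - s"] \<open>0 \<le> Lf\<close>
    by (intro add_left_mono mult_left_mono) (simp_all add: left_diff_distrib)
  finally show ?thesis by (simp add: field_simps)
qed

lemma lambda_min_bound_le_f_tilde:
  assumes "L_smooth Lf f" "strongly_convex \<mu>f f" "0 \<le> \<mu>f"
  shows "f x + (lambda_min second_moment - 1) * \<mu>f / 2 * (norm (x - s))\<^sup>2 \<le> f_tilde D f s x"
proof -
  have "f x + \<mu>f / 2 * ((lambda_min second_moment - 1) * (norm (x - s))\<^sup>2)
          \<le> f x + \<mu>f / 2 * ((x - s) \<bullet> (second_moment *v (x - s)) - (norm (x - s))\<^sup>2)"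
    using lambda_min_le_quadratic_form[OF second_moment_symmetric, of "x - s"] \<open>0 \<le> \<mu>f\<close>
    by (intro add_left_mono mult_left_mono) (simp_all add: left_diff_distrib)
  also have "\<dots> \<le> f_tilde D f s x"
    by (rule f_tilde_between_quadratic_models(1)[OF assms(1,2)])
  finally show ?thesis by (simp add: field_simps)
qed

end

theorem theorem1:
  fixes f :: "real^'n \<Rightarrow> real" and s xstar xD :: "real^'n"
    and D :: "(real^'n^'n) measure" and Lf \<mu>f :: real
  assumes D_prob: "prob_space D"
    and D_sets: "sets D = sets borel"
    and ES_int: "integrable D (\<lambda>S. S)"
    and ES: "(\<integral>S. S \<partial>D) = mat 1"
    and ESS_int: "integrable D (\<lambda>S. transpose S ** S)"
    and Lf_pos: "0 < Lf" and muf_pos: "0 < \<mu>f"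
    and smooth: "L_smooth Lf f"
    and sconv: "strongly_convex \<mu>f f"
    and xstar_min: "\<forall>x. f xstar \<le> f x"
    and xD_min: "\<forall>x. f_tilde D f s xD \<le> f_tilde D f s x"
  shows "f xstar \<le> f xD \<and>
         f xD \<le> f xstar
           + (lambda_max (\<integral>S. transpose S ** S \<partial>D) - 1) * Lf / 2 * (norm (xstar - s))\<^sup>2
           - (lambda_min (\<integral>S. transpose S ** S \<partial>D) - 1) * \<mu>f / 2 * (norm (xD - s))\<^sup>2"
proof -
  interpret sketch_distribution D
    using D_prob D_sets ES_int ES ESS_int
    by (simp add: sketch_distribution_def sketch_distribution_axioms_def)
  have "f xD + (lambda_min second_moment - 1) * \<mu>f / 2 * (norm (xD - s))\<^sup>2 \<le> f_tilde D f s xD"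
    using lambda_min_bound_le_f_tilde smooth sconv muf_pos by simp
  also have "\<dots> \<le> f_tilde D f s xstar"
    using xD_min by simp
  also have "\<dots> \<le> f xstar + (lambda_max second_moment - 1) * Lf / 2 * (norm (xstar - s))\<^sup>2"
    using f_tilde_le_lambda_max_bound smooth sconv Lf_pos by simp
  finally show ?thesis
    using xstar_min by (simp add: second_moment_def)
qed

end
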